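(* Let $L,h,\beta>0$. There exists a solution $\hat{\mathcal Z}:\mathbb{R}\to\mathbb{R}^2$ of $\ddot z=-\nabla V_\beta(z)$ with energy $\frac12|\dot z|^2+V_\beta(z)=h$ such that: (i) $\hat{\mathcal Z}(0),\hat{\mathcal Z}(T)\in\ell$ for some $T>0$ and $\hat{\mathcal Z}(t)\in\mathcal P$ for all $t\in(0,T)$; (ii) the angle between $\dot{\hat{\mathcal Z}}(0)$ and $(1,0)$ is less than $\pi/2$, and the angle between $(-1,0)$ and $\dot{\hat{\mathcal Z}}(T)$ is greater than $\pi/2$; (iii) $\operatorname{Ind}(\hat{\mathcal Z}|_{[0,T]})=1$.
   Context: $V_\beta(z)=-\frac1{|z|}-\frac{\beta}{|z|^2}$ on $\mathbb{R}^2\setminus\{0\}$; $\ell=\{(x,y):y=-L\}$; $\mathcal P=\{(x,y):y>-L\}$. Winding number: for $u:[a,b]\to\overline{\mathcal P}$ with $u(a),u(b)\in\ell$ and $u(s)\in\mathcal P\setminus\{0\}$ for all $s\in(a,b)$, let $\gamma_u$ be the closed curve obtained by concatenating $u$ with the oriented segment from $u(b)$ to $u(a)$; then $\operatorname{Ind}(u)=\frac{1}{2\pi i}\oint_{\gamma_u}\frac{dz}{z}\in\mathbb{Z}$ (the winding number of $\gamma_u$ around the origin, identifying $\mathbb{R}^2$ with $\mathbb{C}$). *)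

theory Defs
  imports "HOL-Complex_Analysis.Complex_Analysis"
begin

text \<open>The plane R^2 is identified with the complex numbers C (x + i y).\<close>

definition V_beta :: "real \<Rightarrow> complex \<Rightarrow> real" where
  "V_beta \<beta> z = - 1 / cmod z - \<beta> / (cmod z)\<^sup>2"

definition line_ell :: "real \<Rightarrow> complex set" where
  "line_ell L = {z. Im z = - L}"

definition halfplane_P :: "real \<Rightarrow> complex set" where
  "halfplane_P L = {z. Im z > - L}"

definition vec_angle :: "complex \<Rightarrow> complex \<Rightarrow> real" where
  "vec_angle x y = arccos ((x \<bullet> y) / (norm x * norm y))"

definition Ind :: "(real \<Rightarrow> complex) \<Rightarrow> real \<Rightarrow> real \<Rightarrow> complex" where
  "Ind u a b = winding_number
      ((\<lambda>s. u (a + (b - a) * s)) +++ linepath (u b) (u a)) 0"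

end

theory Submission
  imports Defs
begin

text \<open>
  In polar coordinates z = r e^{i theta} with angular momentum c = r^2 theta', Newton's equation
  for V_beta becomes r'' = (c^2 - 2 beta) / r^3 - 1 / r^2: the radial motion is exactly that of
  a Kepler orbit with angular momentum sqrt (c^2 - 2 beta), while the angle is swept faster.
  For energy h > 0 it is the radial motion of a Kepler hyperbola with semi-major axis
  a = 1 / (2 h) and some eccentricity e > 1, parametrised by the hyperbolic anomaly.
  The angle swept between the pericentre and distance L vanishes when the pericentre distance
  a (e - 1) equals L and exceeds pi for e close to 1, so by the intermediate value theorem
  some e makes it exactly pi. With the pericentre straight above the origin, the arc between
  the two times at distance L then starts and ends at (0, -L), stays above the line
  y = -L, crosses it with horizontal velocity c / L and winds once around the origin.
\<close>

section \<open>Solutions of Newton's equation in polar coordinates\<close>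

definition V_beta_orbit ::
    "real \<Rightarrow> real \<Rightarrow> (real \<Rightarrow> complex) \<Rightarrow> (real \<Rightarrow> complex) \<Rightarrow> (real \<Rightarrow> complex) \<Rightarrow> bool" where
  "V_beta_orbit \<beta> h Z Z' Z'' \<longleftrightarrow>
     (\<forall>t. Z t \<noteq> 0) \<and>
     (\<forall>t. (Z has_vector_derivative Z' t) (at t)) \<and>
     (\<forall>t. (Z' has_vector_derivative Z'' t) (at t)) \<and>
     (\<forall>t. (V_beta \<beta> has_derivative (\<lambda>v. (- Z'' t) \<bullet> v)) (at (Z t))) \<and>
     (\<forall>t. (1/2) * (norm (Z' t))\<^sup>2 + V_beta \<beta> (Z t) = h)"

lemma V_beta_has_derivative:
  fixes z :: complex
  assumes "z \<noteq> 0"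
  shows "(V_beta \<beta> has_derivative
           (\<lambda>v. (of_real (1 / norm z ^ 3 + 2 * \<beta> / norm z ^ 4) * z) \<bullet> v)) (at z)"
proof -
  have "norm z \<noteq> 0" using assms by simp
  have "((\<lambda>z. - 1 / norm z - \<beta> / (norm z)\<^sup>2) has_derivative
          (\<lambda>v. (of_real (1 / norm z ^ 3 + 2 * \<beta> / norm z ^ 4) * z) \<bullet> v)) (at z)"
    by (rule has_derivative_eq_rhs, (rule derivative_intros has_derivative_norm assms
          \<open>norm z \<noteq> 0\<close> | simp add: \<open>norm z \<noteq> 0\<close>)+)
      (use \<open>norm z \<noteq> 0\<close> in \<open>auto simp: sgn_div_norm inner_complex_def field_simps eval_nat_numeral\<close>)
  then show ?thesis unfolding V_beta_def[abs_def] .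
qed

lemma V_beta_orbit_shift:
  assumes "V_beta_orbit \<beta> h Z Z' Z''"
  shows "V_beta_orbit \<beta> h (\<lambda>t. Z (t + d)) (\<lambda>t. Z' (t + d)) (\<lambda>t. Z'' (t + d))"
proof -
  have shift: "((\<lambda>t. f (t + d)) has_vector_derivative f' (t + d)) (at t)"
    if "(f has_vector_derivative f' (t + d)) (at (t + d))" for f f' :: "real \<Rightarrow> complex" and t
  proof -
    have "((\<lambda>t. t + d) has_vector_derivative 1) (at t)"
      by (auto intro!: derivative_eq_intros)
    then show ?thesis using vector_diff_chain_at[of "\<lambda>t. t + d" 1 t f] that by (simp add: o_def)
  qed
  show ?thesis
    using assms unfolding V_beta_orbit_def by (auto intro!: shift)
qed

lemma has_vector_derivative_cis [derivative_intros]: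
  assumes "(\<theta> has_real_derivative D) (at x within A)"
  shows "((\<lambda>t. cis (\<theta> t)) has_vector_derivative \<i> * of_real D * cis (\<theta> x)) (at x within A)"
  using has_derivative_cis[OF assms[unfolded has_field_derivative_def]]
  by (simp add: has_vector_derivative_def scaleR_conv_of_real ac_simps)

lemma V_beta_orbit_polar:
  fixes r \<rho> \<theta> :: "real \<Rightarrow> real" and c \<beta> h :: real
  assumes r_pos: "\<And>t. r t > 0"
    and r_deriv: "\<And>t. (r has_real_derivative \<rho> t) (at t)"
    and \<rho>_deriv: "\<And>t. (\<rho> has_real_derivative (c\<^sup>2 - 2 * \<beta>) / r t ^ 3 - 1 / r t ^ 2) (at t)"
    and \<theta>_deriv: "\<And>t. (\<theta> has_real_derivative c / r t ^ 2) (at t)"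
    and energy: "\<And>t. ((\<rho> t)\<^sup>2 + (c / r t)\<^sup>2) / 2 - 1 / r t - \<beta> / (r t)\<^sup>2 = h"
  shows "V_beta_orbit \<beta> h
           (\<lambda>t. of_real (r t) * cis (\<theta> t))
           (\<lambda>t. (of_real (\<rho> t) + \<i> * of_real (c / r t)) * cis (\<theta> t))
           (\<lambda>t. - of_real (1 / r t ^ 2 + 2 * \<beta> / r t ^ 3) * cis (\<theta> t))"
  unfolding V_beta_orbit_def
proof (intro conjI allI)
  fix t
  have "r t \<noteq> 0" using r_pos[of t] by simp
  have norm_Z: "norm (of_real (r t) * cis (\<theta> t)) = r t"
    using r_pos[of t] by (simp add: norm_mult)
  then show "of_real (r t) * cis (\<theta> t) \<noteq> 0" using \<open>r t \<noteq> 0\<close> by force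
  show "((\<lambda>t. of_real (r t) * cis (\<theta> t)) has_vector_derivative
          (of_real (\<rho> t) + \<i> * of_real (c / r t)) * cis (\<theta> t)) (at t)"
    by (rule derivative_eq_intros r_deriv \<theta>_deriv refl)+
      (use \<open>r t \<noteq> 0\<close> in \<open>auto simp: field_simps power2_eq_square\<close>)
  show "((\<lambda>t. (of_real (\<rho> t) + \<i> * of_real (c / r t)) * cis (\<theta> t)) has_vector_derivative
          - of_real (1 / r t ^ 2 + 2 * \<beta> / r t ^ 3) * cis (\<theta> t)) (at t)"
    by (rule derivative_eq_intros r_deriv \<rho>_deriv \<theta>_deriv refl \<open>r t \<noteq> 0\<close>)+
      (use \<open>r t \<noteq> 0\<close> in \<open>auto simp: field_simps power2_eq_square power3_eq_cube\<close>)
  show "(V_beta \<beta> has_derivative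
          (\<lambda>v. - (- of_real (1 / r t ^ 2 + 2 * \<beta> / r t ^ 3) * cis (\<theta> t)) \<bullet> v))
          (at (of_real (r t) * cis (\<theta> t)))"
  proof -
    have "of_real (1 / r t ^ 3 + 2 * \<beta> / r t ^ 4) * (of_real (r t) * cis (\<theta> t))
        = - (- of_real (1 / r t ^ 2 + 2 * \<beta> / r t ^ 3) * cis (\<theta> t))"
      using \<open>r t \<noteq> 0\<close> by (simp add: field_simps eval_nat_numeral)
    then show ?thesis
      using V_beta_has_derivative[OF \<open>of_real (r t) * cis (\<theta> t) \<noteq> 0\<close>, of \<beta>]
      unfolding norm_Z by simp
  qed
  show "1 / 2 * (norm ((of_real (\<rho> t) + \<i> * of_real (c / r t)) * cis (\<theta> t)))\<^sup>2
          + V_beta \<beta> (of_real (r t) * cis (\<theta> t)) = h"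
    using energy[of t] unfolding V_beta_def norm_Z
    by (simp add: norm_mult cmod_power2)
qed

section \<open>Winding index and angles\<close>

lemma Ind_shift: "Ind (\<lambda>t. u (t + d)) a b = Ind u (a + d) (b + d)"
  unfolding Ind_def by (simp add: algebra_simps)

lemma Ind_polar:
  fixes r \<theta> :: "real \<Rightarrow> real" and n :: int
  assumes "a \<le> b" and r_cont: "continuous_on {a..b} r" and \<theta>_cont: "continuous_on {a..b} \<theta>"
    and r_pos: "\<And>t. t \<in> {a..b} \<Longrightarrow> r t > 0"
    and r_closed: "r b = r a" and \<theta>_turn: "\<theta> b = \<theta> a + 2 * pi * n"
  shows "Ind (\<lambda>t. of_real (r t) * cis (\<theta> t)) a b = n"
proof -
  txt \<open>The curve is the exponential of the continuous logarithm ln r + i theta, and the closing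
    segment of Ind degenerates to a point.\<close>
  define Z where "Z = (\<lambda>t. of_real (r t) * cis (\<theta> t))"
  define \<gamma> where "\<gamma> = (\<lambda>s. a + (b - a) * s)"
  define q where "q = (\<lambda>s. of_real (ln (r (\<gamma> s))) + \<i> * of_real (\<theta> (\<gamma> s)))"
  have \<gamma>_into: "\<gamma> s \<in> {a..b}" if "s \<in> {0..1}" for s
    using that \<open>a \<le> b\<close> mult_left_le[of s "b - a"] by (auto simp: \<gamma>_def)
  have Z_exp_q: "Z (\<gamma> s) = exp (q s)" if "s \<in> {0..1}" for s
  proof -
    have "exp (complex_of_real (ln (r (\<gamma> s)))) = of_real (r (\<gamma> s))"
      using r_pos[OF \<gamma>_into[OF that]] by (subst exp_of_real) simp
    then show ?thesis by (simp add: Z_def q_def exp_add cis_conv_exp)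
  qed
  have "continuous_on {0..1} \<gamma>" unfolding \<gamma>_def by (intro continuous_intros)
  then have "continuous_on {0..1} (\<lambda>s. r (\<gamma> s))" "continuous_on {0..1} (\<lambda>s. \<theta> (\<gamma> s))"
    using continuous_on_compose2[OF r_cont] continuous_on_compose2[OF \<theta>_cont] \<gamma>_into
    by blast+
  moreover have "r (\<gamma> s) \<noteq> 0" if "s \<in> {0..1}" for s
    using r_pos[OF \<gamma>_into[OF that]] by simp
  ultimately have "path q"
    unfolding path_def q_def by (intro continuous_intros) auto
  then have "path (exp \<circ> q)" by (intro path_continuous_image continuous_intros)
  have Z_closed: "Z b = Z a" unfolding Z_def r_closed \<theta>_turn by (simp add: cis_mult[symmetric])
  have "Z a \<noteq> 0" using r_pos[of a] \<open>a \<le> b\<close> by (simp add: Z_def)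
  have "winding_number (exp \<circ> q) 0 = (pathfinish q - pathstart q) / (2 * of_real pi * \<i>)"
    by (rule winding_number_compose_exp[OF \<open>path q\<close>])
  also have "\<dots> = n"
    unfolding pathfinish_def pathstart_def q_def \<gamma>_def using r_closed \<theta>_turn
    by (simp add: field_simps)
  finally have winding_exp_q: "winding_number (exp \<circ> q) 0 = n" .
  have "exp (q 1) = Z a" using Z_exp_q[of 1] Z_closed by (simp add: \<gamma>_def)
  have "Ind Z a b = winding_number ((Z \<circ> \<gamma>) +++ linepath (Z b) (Z a)) 0"
    unfolding Ind_def \<gamma>_def o_def ..
  also have "\<dots> = winding_number ((exp \<circ> q) +++ linepath (Z b) (Z a)) 0"
    by (rule winding_number_cong) (simp add: joinpaths_def Z_exp_q)
  also have "\<dots> = winding_number (exp \<circ> q) 0 + winding_number (linepath (Z b) (Z a)) 0"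
    by (rule winding_number_join)
      (use \<open>path (exp \<circ> q)\<close> Z_closed \<open>Z a \<noteq> 0\<close> \<open>exp (q 1) = Z a\<close>
        in \<open>auto simp: pathfinish_def path_image_def\<close>)
  also have "\<dots> = n" using winding_exp_q Z_closed \<open>Z a \<noteq> 0\<close> by simp
  finally show ?thesis unfolding Z_def .
qed

lemma vec_angle_less_pi_half:
  assumes "x \<bullet> y > 0"
  shows "vec_angle x y < pi / 2"
proof -
  have "x \<bullet> y \<le> norm x * norm y" by (rule norm_cauchy_schwarz)
  with assms have "0 < (x \<bullet> y) / (norm x * norm y)" "(x \<bullet> y) / (norm x * norm y) \<le> 1"
    by auto
  then have "arccos ((x \<bullet> y) / (norm x * norm y)) < arccos 0"
    by (intro arccos_less_arccos) auto
  then show ?thesis unfolding vec_angle_def by simp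
qed

lemma vec_angle_greater_pi_half:
  assumes "x \<bullet> y < 0"
  shows "vec_angle x y > pi / 2"
proof -
  have "- (x \<bullet> y) \<le> norm x * norm y" using norm_cauchy_schwarz[of "- x" y] by simp
  with assms have "(x \<bullet> y) / (norm x * norm y) < 0" "-1 \<le> (x \<bullet> y) / (norm x * norm y)"
    by (auto simp: divide_less_0_iff le_divide_eq)
  then have "arccos 0 < arccos ((x \<bullet> y) / (norm x * norm y))"
    by (intro arccos_less_arccos) auto
  then show ?thesis unfolding vec_angle_def by simp
qed

section \<open>Hyperbola-like orbits\<close>

lemma has_real_derivative_sinh_div_cosh_plus_1:
  fixes s :: real
  shows "((\<lambda>s. sinh s / (cosh s + 1)) has_real_derivative 1 / (cosh s + 1)) (at s)"
proof -
  have "cosh s + 1 \<noteq> 0" using cosh_real_ge_1[of s] by linarith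
  have "((\<lambda>s. sinh s / (cosh s + 1)) has_real_derivative
      (cosh s * (cosh s + 1) - sinh s * sinh s) / ((cosh s + 1) * (cosh s + 1))) (at s)"
    using \<open>cosh s + 1 \<noteq> 0\<close> by (auto intro!: derivative_eq_intros)
  moreover have "cosh s * (cosh s + 1) - sinh s * sinh s = cosh s + 1"
    using cosh_square_eq[of s] by (simp add: algebra_simps power2_eq_square)
  ultimately show ?thesis using \<open>cosh s + 1 \<noteq> 0\<close> by simp
qed

lemma one_plus_sq_sinh_div_cosh_plus_1:
  fixes k s :: real
  shows "(1 + (k * (sinh s / (cosh s + 1)))\<^sup>2) * (cosh s + 1) = (cosh s + 1) + k\<^sup>2 * (cosh s - 1)"
proof -
  define p where "p = cosh s + 1"
  have "p \<noteq> 0" using cosh_real_ge_1[of s] by (simp add: p_def)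
  have "(sinh s)\<^sup>2 = (cosh s - 1) * p"
    using cosh_square_eq[of s] by (simp add: p_def algebra_simps power2_eq_square)
  have "(1 + (k * (sinh s / p))\<^sup>2) * p = p + k\<^sup>2 * (sinh s)\<^sup>2 / p"
    using \<open>p \<noteq> 0\<close> by (simp add: power_mult_distrib power_divide algebra_simps power2_eq_square)
  also have "\<dots> = p + k\<^sup>2 * (cosh s - 1)"
    using \<open>p \<noteq> 0\<close> unfolding \<open>(sinh s)\<^sup>2 = (cosh s - 1) * p\<close> by simp
  finally show ?thesis unfolding p_def .
qed

text \<open>
  The orbit with energy 1 / (2 a), eccentricity e and angular momentum c, parametrised by the
  hyperbolic anomaly s: R is the distance, Rho the radial velocity and Th the polar angle
  measured from the pericentre s = 0; time is Kepler's equation for hyperbolic orbits and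
  anomaly its inverse. Derivatives with respect to s carry the factor sqrt a * R s, the
  derivative of time.
\<close>

locale hyperbolic_orbit =
  fixes a e \<beta> :: real
  assumes a_pos: "a > 0" and e_gt_1: "e > 1" and \<beta>_nonneg: "\<beta> \<ge> 0"
begin

definition c :: real where "c = sqrt (a * (e\<^sup>2 - 1) + 2 * \<beta>)"

definition R :: "real \<Rightarrow> real" where "R s = a * (e * cosh s - 1)"

definition Rho :: "real \<Rightarrow> real" where "Rho s = sqrt a * e * sinh s / R s"

definition Th :: "real \<Rightarrow> real" where
  "Th s = 2 * c / sqrt (a * (e\<^sup>2 - 1)) * arctan (sqrt ((e + 1) / (e - 1)) * (sinh s / (cosh s + 1)))"

definition time :: "real \<Rightarrow> real" where "time s = a * sqrt a * (e * sinh s - s)"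

definition anomaly :: "real \<Rightarrow> real" where "anomaly = inv time"

lemma c_pos: "c > 0"
  using a_pos e_gt_1 \<beta>_nonneg by (simp add: c_def add_pos_nonneg)

lemma c_sq: "c\<^sup>2 - 2 * \<beta> = a * (e\<^sup>2 - 1)"
  using a_pos e_gt_1 \<beta>_nonneg by (simp add: c_def)

lemma e_cosh_gt_1: "e * cosh s > 1"
proof -
  have "e * 1 \<le> e * cosh s" using e_gt_1 by (intro mult_left_mono cosh_real_ge_1) simp
  then show ?thesis using e_gt_1 by linarith
qed

lemma R_pos: "R s > 0"
  unfolding R_def using a_pos e_cosh_gt_1[of s] by simp

lemma R_minus: "R (- s) = R s"
  unfolding R_def by simp

lemma Th_minus: "Th (- s) = - Th s"
  unfolding Th_def by (simp add: arctan_minus)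

lemma R_has_real_derivative: "(R has_real_derivative a * e * sinh s) (at s)"
  unfolding R_def[abs_def] by (auto intro!: derivative_eq_intros)

lemma sqrt_a_R_Rho: "sqrt a * R s * Rho s = a * e * sinh s"
proof -
  have "sqrt a * sqrt a = a" using a_pos by simp
  then show ?thesis unfolding Rho_def using R_pos[of s] by (simp add: field_simps)
qed

lemma Rho_has_real_derivative:
  "(Rho has_real_derivative sqrt a * R s * ((c\<^sup>2 - 2 * \<beta>) / R s ^ 3 - 1 / R s ^ 2)) (at s)"
proof -
  have "R s \<noteq> 0" using R_pos[of s] by simp
  have "(Rho has_real_derivative
          (sqrt a * e * cosh s * R s - sqrt a * e * sinh s * (a * e * sinh s)) / (R s)\<^sup>2) (at s)"
    unfolding Rho_def[abs_def]
    using DERIV_divide[OF DERIV_cmult[OF has_field_derivative_sinh[OF DERIV_ident]]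
        R_has_real_derivative \<open>R s \<noteq> 0\<close>, of "sqrt a * e"]
    by (simp add: power2_eq_square)
  also have "sqrt a * e * cosh s * R s - sqrt a * e * sinh s * (a * e * sinh s)
      = sqrt a * (a * (e\<^sup>2 - 1) - R s)"
    unfolding R_def using cosh_square_eq[of s] by (simp add: algebra_simps power2_eq_square)
  also have "sqrt a * (a * (e\<^sup>2 - 1) - R s) / (R s)\<^sup>2
      = sqrt a * R s * ((c\<^sup>2 - 2 * \<beta>) / R s ^ 3 - 1 / R s ^ 2)"
    unfolding c_sq using \<open>R s \<noteq> 0\<close> by (simp add: field_simps power2_eq_square power3_eq_cube)
  finally show ?thesis .
qed

lemma Th_has_real_derivative: "(Th has_real_derivative sqrt a * R s * (c / R s ^ 2)) (at s)"
proof -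
  define k where "k = sqrt ((e + 1) / (e - 1))"
  define u :: "real \<Rightarrow> real" where "u = (\<lambda>s. sinh s / (cosh s + 1))"
  have "Th = (\<lambda>s. 2 * c / sqrt (a * (e\<^sup>2 - 1)) * arctan (k * u s))"
    unfolding Th_def k_def u_def ..
  then have deriv: "(Th has_real_derivative
      2 * c / sqrt (a * (e\<^sup>2 - 1)) * (inverse (1 + (k * u s)\<^sup>2) * (k * (1 / (cosh s + 1))))) (at s)"
    unfolding u_def
    by (simp only:) (intro DERIV_cmult DERIV_arctan[THEN DERIV_chain2]
        has_real_derivative_sinh_div_cosh_plus_1)
  have "k > 0" and k_sq: "k\<^sup>2 * (e - 1) = e + 1" using e_gt_1 by (auto simp: k_def)
  have "(sqrt a * k * (e - 1))\<^sup>2 = a * ((k\<^sup>2 * (e - 1)) * (e - 1))"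
    using a_pos by (simp add: power_mult_distrib power2_eq_square)
  also have "\<dots> = a * (e\<^sup>2 - 1)"
    by (simp only: k_sq) (simp add: algebra_simps power2_eq_square)
  finally have "sqrt (a * (e\<^sup>2 - 1)) = sqrt ((sqrt a * k * (e - 1))\<^sup>2)" by simp
  then have numer: "sqrt (a * (e\<^sup>2 - 1)) = sqrt a * k * (e - 1)"
    using a_pos \<open>k > 0\<close> e_gt_1 by simp
  have "(1 + (k * u s)\<^sup>2) * (cosh s + 1) * (e - 1) = ((cosh s + 1) + k\<^sup>2 * (cosh s - 1)) * (e - 1)"
    unfolding u_def one_plus_sq_sinh_div_cosh_plus_1 ..
  also have "\<dots> = (cosh s + 1) * (e - 1) + (k\<^sup>2 * (e - 1)) * (cosh s - 1)"
    by (simp add: algebra_simps)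
  also have "\<dots> = 2 * (e * cosh s - 1)"
    by (simp only: k_sq) (simp add: algebra_simps)
  finally have denom: "(1 + (k * u s)\<^sup>2) * (cosh s + 1) * (e - 1) = 2 * (e * cosh s - 1)" .
  have "cosh s + 1 > 0" using cosh_real_ge_1[of s] by linarith
  have sqrt_a_sq: "a * (e * cosh s - 1) = sqrt a * (sqrt a * (e * cosh s - 1))"
    using a_pos by (simp flip: mult.assoc)
  have "2 * c / sqrt (a * (e\<^sup>2 - 1)) * (inverse (1 + (k * u s)\<^sup>2) * (k * (1 / (cosh s + 1))))
      = 2 * c / (sqrt a * ((1 + (k * u s)\<^sup>2) * (cosh s + 1) * (e - 1)))"
    unfolding numer using \<open>k > 0\<close> e_gt_1 a_pos \<open>cosh s + 1 > 0\<close>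
    by (simp add: divide_simps add_pos_nonneg)
  also have "\<dots> = c / (sqrt a * (e * cosh s - 1))"
    unfolding denom using a_pos e_cosh_gt_1[of s] by (simp add: field_simps)
  also have "\<dots> = sqrt a * c / R s"
    unfolding R_def sqrt_a_sq using a_pos by simp
  also have "\<dots> = sqrt a * R s * (c / R s ^ 2)"
    using R_pos[of s] by (simp add: power2_eq_square)
  finally show ?thesis using deriv by simp
qed

lemma energy_anomaly: "((Rho s)\<^sup>2 + (c / R s)\<^sup>2) / 2 - 1 / R s - \<beta> / (R s)\<^sup>2 = 1 / (2 * a)"
proof -
  define E where "E = e * cosh s"
  have R_E: "R s = a * (E - 1)" unfolding R_def E_def ..
  have "R s \<noteq> 0" using R_pos[of s] by simp
  have "(Rho s)\<^sup>2 = a * e\<^sup>2 * (sinh s)\<^sup>2 / (R s)\<^sup>2"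
    unfolding Rho_def using a_pos by (simp add: power_divide power_mult_distrib)
  also have "a * e\<^sup>2 * (sinh s)\<^sup>2 = a * (E\<^sup>2 - e\<^sup>2)"
    unfolding E_def by (simp add: sinh_square_eq power_mult_distrib algebra_simps)
  finally have sum_sq: "(Rho s)\<^sup>2 + (c / R s)\<^sup>2 = (a * (E\<^sup>2 - 1) + 2 * \<beta>) / (R s)\<^sup>2"
    using c_sq by (simp add: power_divide add_divide_distrib[symmetric] algebra_simps)
  have "((Rho s)\<^sup>2 + (c / R s)\<^sup>2) / 2 - 1 / R s - \<beta> / (R s)\<^sup>2
      = a * (E\<^sup>2 - 1) / (2 * (R s)\<^sup>2) - 1 / R s"
    unfolding sum_sq using \<open>R s \<noteq> 0\<close> by (simp add: field_simps)
  also have "a * (E\<^sup>2 - 1) = R s * (E + 1)"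
    unfolding R_E by (simp add: algebra_simps power2_eq_square)
  also have "R s * (E + 1) / (2 * (R s)\<^sup>2) - 1 / R s = (E - 1) / (2 * R s)"
    using \<open>R s \<noteq> 0\<close> by (simp add: field_simps power2_eq_square)
  also have "\<dots> = 1 / (2 * a)"
    unfolding R_E using a_pos e_cosh_gt_1[of s] by (simp add: E_def)
  finally show ?thesis .
qed

lemma time_has_real_derivative: "(time has_real_derivative sqrt a * R s) (at s)"
proof -
  have "(time has_real_derivative a * sqrt a * (e * cosh s - 1)) (at s)"
    unfolding time_def[abs_def] by (auto intro!: derivative_eq_intros)
  then show ?thesis by (simp add: R_def mult_ac)
qed

lemma strict_mono_time: "strict_mono time"
proof -
  have "sqrt a * R s > 0" for s using a_pos R_pos[of s] by simp
  then show ?thesis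
    using time_has_real_derivative by (metis strict_monoI DERIV_pos_imp_increasing)
qed

lemma time_minus: "time (- s) = - time s"
  unfolding time_def by (simp add: algebra_simps)

lemma time_lower_bound:
  assumes "s \<ge> 0"
  shows "time s \<ge> a * sqrt a * (e - 1) * s"
proof -
  have "(\<lambda>s. sinh s - s) 0 \<le> (\<lambda>s. sinh s - s) s"
    by (rule DERIV_nonneg_imp_nondecreasing[OF assms])
      (auto intro!: exI derivative_eq_intros simp: cosh_real_ge_1)
  then have "a * sqrt a * (e * s) \<le> a * sqrt a * (e * sinh s)"
    using a_pos e_gt_1 by (intro mult_left_mono) auto
  then show ?thesis unfolding time_def by (simp add: algebra_simps)
qed

lemma surj_time: "surj time"
proof -
  have "\<exists>s. time s = y" for y
  proof -
    define M where "M = \<bar>y\<bar> / (a * sqrt a * (e - 1))"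
    have "M \<ge> 0" using a_pos e_gt_1 by (simp add: M_def)
    then have "time M \<ge> \<bar>y\<bar>"
      using time_lower_bound[of M] a_pos e_gt_1 by (simp add: M_def)
    moreover have "continuous_on {-M..M} time"
      using time_has_real_derivative
      by (intro continuous_at_imp_continuous_on) (auto intro: DERIV_isCont)
    ultimately show ?thesis
      using IVT'[of time "-M" y M] \<open>M \<ge> 0\<close> time_minus[of M] by force
  qed
  then show ?thesis by (metis surjI)
qed

lemma time_anomaly [simp]: "time (anomaly t) = t"
  unfolding anomaly_def using surj_time by (simp add: surj_f_inv_f)

lemma anomaly_time [simp]: "anomaly (time s) = s"
  unfolding anomaly_def using strict_mono_time by (simp add: strict_mono_imp_inj_on)

lemma anomaly_has_real_derivative:
  "(anomaly has_real_derivative 1 / (sqrt a * R (anomaly t))) (at t)"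
proof -
  have "isCont time s" for s using time_has_real_derivative by (rule DERIV_isCont)
  then have "isCont anomaly t"
    using isCont_inverse_function[where f=time and g=anomaly and d=1 and x="anomaly t"] by simp
  moreover have "sqrt a * R (anomaly t) \<noteq> 0" using a_pos R_pos[of "anomaly t"] by simp
  ultimately have "(anomaly has_real_derivative inverse (sqrt a * R (anomaly t))) (at t)"
    by (intro DERIV_inverse_function[where f=time and a="t - 1" and b="t + 1"]
        time_has_real_derivative) auto
  then show ?thesis by (simp add: divide_inverse)
qed

lemma has_real_derivative_comp_anomaly:
  assumes "\<And>s. (f has_real_derivative sqrt a * R s * g s) (at s)"
  shows "((\<lambda>t. f (anomaly t)) has_real_derivative g (anomaly t)) (at t)"
proof -
  have "sqrt a * R (anomaly t) \<noteq> 0" using a_pos R_pos[of "anomaly t"] by simp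
  then show ?thesis using DERIV_chain2[OF assms[of "anomaly t"] anomaly_has_real_derivative[of t]] by simp
qed

text \<open>The pericentre is placed straight above the origin.\<close>

definition position :: "real \<Rightarrow> complex" where
  "position t = of_real (R (anomaly t)) * cis (pi / 2 + Th (anomaly t))"

definition velocity :: "real \<Rightarrow> complex" where
  "velocity t =
     (of_real (Rho (anomaly t)) + \<i> * of_real (c / R (anomaly t))) * cis (pi / 2 + Th (anomaly t))"

lemma R_anomaly_has_real_derivative:
  "((\<lambda>t. R (anomaly t)) has_real_derivative Rho (anomaly t)) (at t)"
  using R_has_real_derivative by (intro has_real_derivative_comp_anomaly) (simp add: sqrt_a_R_Rho)

lemma polar_angle_has_real_derivative:
  "((\<lambda>t. pi / 2 + Th (anomaly t)) has_real_derivative c / R (anomaly t) ^ 2) (at t)"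
  using DERIV_add[OF DERIV_const has_real_derivative_comp_anomaly[OF Th_has_real_derivative]] by simp

lemma V_beta_orbit_position: "\<exists>Z''. V_beta_orbit \<beta> (1 / (2 * a)) position velocity Z''"
  using V_beta_orbit_polar[OF R_pos R_anomaly_has_real_derivative
      has_real_derivative_comp_anomaly[OF Rho_has_real_derivative] polar_angle_has_real_derivative
      energy_anomaly]
  unfolding position_def[abs_def] velocity_def[abs_def] by blast

end

section \<open>The arc between two crossings of the line\<close>

text \<open>The value of Th where the distance L is reached, as a function of e (see Th_s1).\<close>

definition sweep_angle :: "real \<Rightarrow> real \<Rightarrow> real \<Rightarrow> real \<Rightarrow> real" where
  "sweep_angle a \<beta> L e =
     2 * sqrt (a * (e\<^sup>2 - 1) + 2 * \<beta>) / sqrt (a * (e\<^sup>2 - 1))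
       * arctan (sqrt ((e + 1) / (e - 1)) * sqrt ((1 + L / a - e) / (1 + L / a + e)))"

lemma continuous_on_sweep_angle:
  assumes "a > 0" "L \<ge> 0"
  shows "continuous_on {1<..} (sweep_angle a \<beta> L)"
  unfolding sweep_angle_def[abs_def]
proof (intro continuous_intros ballI)
  fix x :: real assume "x \<in> {1<..}"
  then have "x > 1" by simp
  then have "a * (x\<^sup>2 - 1) > 0"
    using assms less_1_mult[of x x] by (simp add: power2_eq_square)
  from real_sqrt_gt_zero[OF this] show "sqrt (a * (x\<^sup>2 - 1)) \<noteq> 0" by linarith
  show "x - 1 \<noteq> 0" using \<open>x > 1\<close> by simp
  have "L / a \<ge> 0" using assms by simp
  then show "1 + L / a + x \<noteq> 0" using \<open>x > 1\<close> by linarith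
qed

lemma sweep_angle_ge_pi:
  assumes a: "a > 0" and "e > 1" and e_sq: "e\<^sup>2 \<le> 1 + L / a" "e\<^sup>2 \<le> 1 + 2 * \<beta> / (3 * a)"
  shows "sweep_angle a \<beta> L e \<ge> pi"
proof -
  define C where "C = 1 + L / a"
  have "e\<^sup>2 \<le> C" using e_sq(1) by (simp add: C_def)
  define X where "X = a * (e\<^sup>2 - 1)"
  have "X > 0" unfolding X_def using a \<open>e > 1\<close> by simp
  have "3 * X \<le> 2 * \<beta>" unfolding X_def using e_sq(2) a by (simp add: field_simps)
  then have "sqrt (4 * X) \<le> sqrt (X + 2 * \<beta>)" by simp
  then have "2 * sqrt X \<le> sqrt (X + 2 * \<beta>)" by (simp add: real_sqrt_mult)
  then have ratio: "2 \<le> sqrt (X + 2 * \<beta>) / sqrt X" using \<open>X > 0\<close> by (simp add: field_simps)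
  have "(e - 1) * (C + e) \<le> (e + 1) * (C - e)"
    using \<open>e\<^sup>2 \<le> C\<close> by (simp add: algebra_simps power2_eq_square)
  moreover have "(e - 1) * (C + e) > 0"
    using \<open>e > 1\<close> \<open>e\<^sup>2 \<le> C\<close> zero_le_power2[of e] by (intro mult_pos_pos) linarith+
  ultimately have "1 \<le> ((e + 1) / (e - 1)) * ((C - e) / (C + e))"
    by (simp add: le_divide_eq_1_pos times_divide_times_eq)
  then have "1 \<le> sqrt ((e + 1) / (e - 1)) * sqrt ((C - e) / (C + e))"
    by (metis real_sqrt_le_mono real_sqrt_mult real_sqrt_one)
  then have angle: "pi / 4 \<le> arctan (sqrt ((e + 1) / (e - 1)) * sqrt ((C - e) / (C + e)))"
    by (metis arctan_le_iff arctan_one)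
  have "pi = 2 * (2 * (pi / 4))" by simp
  also have "\<dots> \<le> 2 * (sqrt (X + 2 * \<beta>) / sqrt X
      * arctan (sqrt ((e + 1) / (e - 1)) * sqrt ((C - e) / (C + e))))"
    using ratio angle by (intro mult_left_mono mult_mono) auto
  finally show ?thesis unfolding sweep_angle_def X_def C_def by simp
qed

lemma sweep_angle_eq_pi_solvable:
  assumes a: "a > 0" and L: "L > 0" and \<beta>: "\<beta> > 0"
  shows "\<exists>e. 1 < e \<and> a * (e - 1) < L \<and> sweep_angle a \<beta> L e = pi"
proof -
  txt \<open>At e = 1 + L / a the pericentre is at distance L and nothing is swept.\<close>
  define C where "C = 1 + L / a"
  define e0 where "e0 = sqrt (min C (1 + 2 * \<beta> / (3 * a)))"
  have "C > 1" using a L by (simp add: C_def)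
  then have "min C (1 + 2 * \<beta> / (3 * a)) > 1" using a \<beta> by simp
  then have "e0 > 1" and e0_sq: "e0\<^sup>2 \<le> C" "e0\<^sup>2 \<le> 1 + 2 * \<beta> / (3 * a)"
    unfolding e0_def by auto
  moreover have "e0 < e0\<^sup>2" using \<open>e0 > 1\<close> by (simp add: power2_eq_square)
  ultimately have "e0 < C" by linarith
  have "continuous_on {e0..C} (sweep_angle a \<beta> L)"
    using continuous_on_sweep_angle[of a L \<beta>] a L \<open>e0 > 1\<close>
    by (auto elim!: continuous_on_subset)
  moreover have "sweep_angle a \<beta> L C = 0" by (simp add: sweep_angle_def C_def)
  moreover have "sweep_angle a \<beta> L e0 \<ge> pi"
    using sweep_angle_ge_pi a \<open>e0 > 1\<close> e0_sq unfolding C_def by blast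
  ultimately obtain e where "e0 \<le> e" "e \<le> C" "sweep_angle a \<beta> L e = pi"
    using IVT2'[of "sweep_angle a \<beta> L" C pi e0] \<open>e0 < C\<close> by force
  moreover have "e \<noteq> C" using \<open>sweep_angle a \<beta> L C = 0\<close> \<open>sweep_angle a \<beta> L e = pi\<close> by auto
  ultimately show ?thesis
    using \<open>e0 > 1\<close> a by (intro exI[of _ e]) (auto simp: C_def field_simps)
qed

locale hyperbolic_arc = hyperbolic_orbit +
  fixes L :: real
  assumes L_gt: "a * (e - 1) < L" and sweep_angle_eq_pi: "sweep_angle a \<beta> L e = pi"
begin

definition s1 :: real where "s1 = arcosh ((1 + L / a) / e)"

lemma arcosh_arg_gt_1: "(1 + L / a) / e > 1"
  using L_gt a_pos e_gt_1 by (simp add: field_simps)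

lemma cosh_s1: "cosh s1 = (1 + L / a) / e"
  unfolding s1_def using arcosh_arg_gt_1 by simp

lemma s1_pos: "s1 > 0"
  unfolding s1_def using arcosh_arg_gt_1 arcosh_real_gt_1_iff by force

lemma R_s1: "R s1 = L"
  unfolding R_def cosh_s1 using a_pos e_gt_1 by simp

lemma Th_s1: "Th s1 = pi"
proof -
  define C where "C = 1 + L / a"
  define x where "x = C / e"
  have "x > 1" using arcosh_arg_gt_1 by (simp add: x_def C_def)
  have "sinh s1 = sqrt (x\<^sup>2 - 1)"
    unfolding s1_def C_def[symmetric] x_def[symmetric] using \<open>x > 1\<close> by (simp add: sinh_arcosh_real)
  then have "sinh s1 / (cosh s1 + 1) = sqrt ((x\<^sup>2 - 1) / (x + 1)\<^sup>2)"
    using \<open>x > 1\<close> unfolding cosh_s1 C_def[symmetric] x_def[symmetric] by (simp add: real_sqrt_divide)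
  also have "(x\<^sup>2 - 1) / (x + 1)\<^sup>2 = ((x - 1) * (x + 1)) / ((x + 1) * (x + 1))"
    by (simp add: power2_eq_square algebra_simps)
  also have "\<dots> = (x - 1) / (x + 1)"
    using \<open>x > 1\<close> by simp
  also have "\<dots> = (e * (x - 1)) / (e * (x + 1))"
    using e_gt_1 by simp
  also have "\<dots> = (C - e) / (C + e)"
    using e_gt_1 unfolding x_def by (simp add: algebra_simps)
  finally have "Th s1 = sweep_angle a \<beta> L e"
    unfolding Th_def sweep_angle_def c_def C_def by simp
  then show ?thesis using sweep_angle_eq_pi by simp
qed

lemma R_less_L:
  assumes "\<bar>s\<bar> < s1"
  shows "R s < L"
proof -
  have "cosh \<bar>s\<bar> < cosh s1"
    using cosh_real_nonneg_less_iff[of "\<bar>s\<bar>" s1] assms s1_pos by simp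
  then have "R s < R s1"
    unfolding R_def using a_pos e_gt_1 by simp
  then show ?thesis unfolding R_s1 .
qed

lemma time_s1_pos: "time s1 > 0"
  using strict_monoD[OF strict_mono_time s1_pos] by (simp add: time_def)

lemma anomaly_at_boundary: "anomaly (time s1) = s1" "anomaly (- time s1) = - s1"
  using anomaly_time[of "- s1"] by (simp_all add: time_minus)

lemma cis_at_boundary: "cis (pi / 2 + Th s1) = - \<i>" "cis (pi / 2 + Th (- s1)) = - \<i>"
  unfolding Th_minus Th_s1 by (simp_all only: cis_mult[symmetric]) (simp_all add: complex_eq_iff)

lemma position_at_boundary: "position (time s1) = - \<i> * L" "position (- time s1) = - \<i> * L"
  unfolding position_def anomaly_at_boundary cis_at_boundary R_minus R_s1 by simp_all

lemma Re_velocity_at_boundary: "Re (velocity (time s1)) = c / L" "Re (velocity (- time s1)) = c / L"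
  unfolding velocity_def anomaly_at_boundary cis_at_boundary R_minus R_s1 by simp_all

lemma abs_anomaly_less_s1:
  assumes "\<bar>t\<bar> < time s1"
  shows "\<bar>anomaly t\<bar> < s1"
proof -
  have "time (- s1) < time (anomaly t) \<and> time (anomaly t) < time s1"
    using assms by (simp add: time_minus abs_less_iff)
  then show ?thesis by (simp only: strict_mono_less[OF strict_mono_time]) auto
qed

lemma Im_position_gt:
  assumes "\<bar>t\<bar> < time s1"
  shows "Im (position t) > - L"
proof -
  have "R (anomaly t) < L" by (rule R_less_L[OF abs_anomaly_less_s1[OF assms]])
  moreover have "- R (anomaly t) \<le> R (anomaly t) * sin (pi / 2 + Th (anomaly t))"
    using R_pos[of "anomaly t"] mult_left_mono[OF sin_ge_minus_one, of "R (anomaly t)"] by simp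
  ultimately show ?thesis unfolding position_def by simp
qed

lemma Ind_position: "Ind position (- time s1) (time s1) = 1"
proof -
  have "continuous_on UNIV (\<lambda>t. R (anomaly t))" "continuous_on UNIV (\<lambda>t. pi / 2 + Th (anomaly t))"
    using R_anomaly_has_real_derivative polar_angle_has_real_derivative
    by (auto intro!: continuous_at_imp_continuous_on DERIV_isCont)
  then show ?thesis
    unfolding position_def[abs_def]
    using Ind_polar[of "- time s1" "time s1" "\<lambda>t. R (anomaly t)" "\<lambda>t. pi / 2 + Th (anomaly t)" 1]
      time_s1_pos R_pos
    by (simp add: anomaly_at_boundary R_minus Th_minus Th_s1 continuous_on_subset)
qed

end

theorem lemma2p2:
  fixes L h \<beta> :: real
  assumes "L > 0" "h > 0" "\<beta> > 0"
  shows "\<exists>Z Z' Z'' :: real \<Rightarrow> complex. \<exists>T :: real.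
     (\<forall>t. Z t \<noteq> 0) \<and>
     (\<forall>t. (Z has_vector_derivative Z' t) (at t)) \<and>
     (\<forall>t. (Z' has_vector_derivative Z'' t) (at t)) \<and>
     (\<forall>t. (V_beta \<beta> has_derivative (\<lambda>v. (- Z'' t) \<bullet> v)) (at (Z t))) \<and>
     (\<forall>t. (1/2) * (norm (Z' t))\<^sup>2 + V_beta \<beta> (Z t) = h) \<and>
     T > 0 \<and> Z 0 \<in> line_ell L \<and> Z T \<in> line_ell L \<and>
     (\<forall>t\<in>{0<..<T}. Z t \<in> halfplane_P L) \<and>
     vec_angle (Z' 0) 1 < pi / 2 \<and>
     vec_angle (-1) (Z' T) > pi / 2 \<and>
     Ind Z 0 T = 1"
proof -
  define a where "a = 1 / (2 * h)"
  have "a > 0" using assms by (simp add: a_def)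
  then obtain e where "1 < e" "a * (e - 1) < L" "sweep_angle a \<beta> L e = pi"
    using sweep_angle_eq_pi_solvable assms(1,3) by blast
  then interpret hyperbolic_arc a e \<beta> L
    using \<open>a > 0\<close> assms(3) by unfold_locales auto
  define \<tau> where "\<tau> = time s1"
  obtain Z'' where "V_beta_orbit \<beta> h position velocity Z''"
    using V_beta_orbit_position assms(2) by (auto simp: a_def)
  then have orbit:
    "V_beta_orbit \<beta> h (\<lambda>t. position (t - \<tau>)) (\<lambda>t. velocity (t - \<tau>)) (\<lambda>t. Z'' (t - \<tau>))"
    using V_beta_orbit_shift[where d = "- \<tau>"] by simp
  have winding: "Ind (\<lambda>t. position (t - \<tau>)) 0 (2 * \<tau>) = 1"
    using Ind_shift[of position "- \<tau>" 0 "2 * \<tau>"] Ind_position by (simp add: \<tau>_def)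
  have above: "\<forall>t\<in>{0<..<2 * \<tau>}. position (t - \<tau>) \<in> halfplane_P L"
    using Im_position_gt by (auto simp: \<tau>_def halfplane_P_def abs_less_iff)
  have "c / L > 0" using c_pos assms(1) by simp
  show ?thesis
    by (rule exI[of _ "\<lambda>t. position (t - \<tau>)"], rule exI[of _ "\<lambda>t. velocity (t - \<tau>)"],
        rule exI[of _ "\<lambda>t. Z'' (t - \<tau>)"], rule exI[of _ "2 * \<tau>"])
      (use orbit winding above \<open>c / L > 0\<close> time_s1_pos position_at_boundary
        Re_velocity_at_boundary vec_angle_less_pi_half[of "velocity (- \<tau>)" 1]
        vec_angle_greater_pi_half[of "-1" "velocity \<tau>"]
        in \<open>simp add: V_beta_orbit_def \<tau>_def line_ell_def inner_complex_def\<close>)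
qed

end
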